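(* Let $\gamma=(\gamma_1,\gamma_2)\ge(0,0)$, $\varkappa\ge0$, and $\tilde\gamma\in\mathbb R^2$ with $-\gamma\le\tilde\gamma\le\gamma$. If $A\in\mathcal M_{\gamma,\varkappa}$ and $\zeta\in Y_{\tilde\gamma}$, then $A\zeta$, defined by $(A\zeta)_a=\sum_{b\in\mathcal L}A_a^b\zeta_b$, is well defined (the series converge), $A\zeta\in Y_{\tilde\gamma}$, and $$\|A\zeta\|_{\tilde\gamma}\le|A|_{\gamma,\varkappa}\,\|\zeta\|_{\tilde\gamma}.$$
   Context: Let $d_*\ge1$ and $\mathcal L\subset\mathbb Z^{d_*}$. For $a\in\mathbb Z^{d_*}$, $\langle a\rangle=\max(|a|,1)$ and $[a-b]=\min(|a-b|,|a+b|)$; pairs in $\mathbb R^2$ are ordered componentwise. For $\gamma=(\gamma_1,\gamma_2)\in\mathbb R^2$, $Y_\gamma$ is the space of sequences $\zeta=(\zeta_a)_{a\in\mathcal L}\in(\mathbb C^2)^{\mathcal L}$ with $\|\zeta\|_\gamma^2=\sum_{a\in\mathcal L}|\zeta_a|^2e^{2\gamma_1|a|}\langle a\rangle^{2\gamma_2}<\infty$ ($|\cdot|$ the Hermitian norm on $\mathbb C^2$). For $\varkappa\ge0$ let $e_{\gamma,\varkappa}(a,b)=C\,e^{\gamma_1[a-b]}\max([a-b],1)^{\gamma_2}\min(\langle a\rangle,\langle b\rangle)^{\varkappa}$, where $C\ge1$ is a fixed constant taken sufficiently large depending only on $\gamma_2,\varkappa$ (standing assumption). For a matrix $A=(A_a^b)_{a,b\in\mathcal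 L}$ of complex $2\times 2$ blocks, $|A|_{\gamma,\varkappa}=\max\{\sup_a\sum_b\|A_a^b\|e_{\gamma,\varkappa}(a,b),\ \sup_b\sum_a\|A_a^b\|e_{\gamma,\varkappa}(a,b)\}$ (operator norms of the blocks), and $\mathcal M_{\gamma,\varkappa}$ is the space of such matrices with finite norm. *)

theory Defs
  imports "HOL-Analysis.Analysis"
begin

text \<open>Points of \<open>\<int>^d\<close> are represented as functions \<open>nat \<Rightarrow> int\<close>
  vanishing at indices \<open>\<ge> d\<close>; elements of \<open>\<complex>^2\<close> as \<open>complex^2\<close>
  (whose norm is the Hermitian norm); \<open>2\<times>2\<close> blocks as \<open>complex^2^2\<close>.\<close>

type_synonym lpt = "nat \<Rightarrow> int"

definition lat :: "nat \<Rightarrow> lpt set" where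
  "lat d = {a. \<forall>i\<ge>d. a i = 0}"

definition lnorm :: "nat \<Rightarrow> lpt \<Rightarrow> real" where
  "lnorm d a = sqrt (\<Sum>i<d. (real_of_int (a i))^2)"

definition jbr :: "nat \<Rightarrow> lpt \<Rightarrow> real" where
  "jbr d a = max (lnorm d a) 1"

definition bdist :: "nat \<Rightarrow> lpt \<Rightarrow> lpt \<Rightarrow> real" where
  "bdist d a b = min (lnorm d (\<lambda>i. a i - b i)) (lnorm d (\<lambda>i. a i + b i))"

definition wt :: "nat \<Rightarrow> real \<Rightarrow> real \<Rightarrow> lpt \<Rightarrow> real" where
  "wt d g1 g2 a = exp (g1 * lnorm d a) * (jbr d a) powr g2"

definition inY :: "nat \<Rightarrow> lpt set \<Rightarrow> real \<Rightarrow> real \<Rightarrow> (lpt \<Rightarrow> complex^2) \<Rightarrow> bool" where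
  "inY d L g1 g2 \<zeta> \<longleftrightarrow> (\<lambda>a. (norm (\<zeta> a))^2 * (wt d g1 g2 a)^2) summable_on L"

definition Ynorm :: "nat \<Rightarrow> lpt set \<Rightarrow> real \<Rightarrow> real \<Rightarrow> (lpt \<Rightarrow> complex^2) \<Rightarrow> real" where
  "Ynorm d L g1 g2 \<zeta> = sqrt (\<Sum>\<^sub>\<infinity>a\<in>L. (norm (\<zeta> a))^2 * (wt d g1 g2 a)^2)"

definition ew :: "real \<Rightarrow> nat \<Rightarrow> real \<Rightarrow> real \<Rightarrow> real \<Rightarrow> lpt \<Rightarrow> lpt \<Rightarrow> real" where
  "ew C d g1 g2 k a b = C * exp (g1 * bdist d a b) * (max (bdist d a b) 1) powr g2
      * (min (jbr d a) (jbr d b)) powr k"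

definition bnorm :: "complex^2^2 \<Rightarrow> real" where
  "bnorm M = onorm (\<lambda>x. M *v x)"

type_synonym bmat = "lpt \<Rightarrow> lpt \<Rightarrow> complex^2^2"

text \<open>\<open>A\<close> is indexed as \<open>A a b = A_a^b\<close>.\<close>
definition rowsum :: "real \<Rightarrow> nat \<Rightarrow> lpt set \<Rightarrow> real \<Rightarrow> real \<Rightarrow> real \<Rightarrow> bmat \<Rightarrow> lpt \<Rightarrow> real" where
  "rowsum C d L g1 g2 k A a = (\<Sum>\<^sub>\<infinity>b\<in>L. bnorm (A a b) * ew C d g1 g2 k a b)"

definition colsum :: "real \<Rightarrow> nat \<Rightarrow> lpt set \<Rightarrow> real \<Rightarrow> real \<Rightarrow> real \<Rightarrow> bmat \<Rightarrow> lpt \<Rightarrow> real" where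
  "colsum C d L g1 g2 k A b = (\<Sum>\<^sub>\<infinity>a\<in>L. bnorm (A a b) * ew C d g1 g2 k a b)"

definition inM :: "real \<Rightarrow> nat \<Rightarrow> lpt set \<Rightarrow> real \<Rightarrow> real \<Rightarrow> real \<Rightarrow> bmat \<Rightarrow> bool" where
  "inM C d L g1 g2 k A \<longleftrightarrow>
     (\<forall>a\<in>L. (\<lambda>b. bnorm (A a b) * ew C d g1 g2 k a b) summable_on L) \<and>
     (\<forall>b\<in>L. (\<lambda>a. bnorm (A a b) * ew C d g1 g2 k a b) summable_on L) \<and>
     bdd_above (rowsum C d L g1 g2 k A ` L) \<and> bdd_above (colsum C d L g1 g2 k A ` L)"

definition Mnorm :: "real \<Rightarrow> nat \<Rightarrow> lpt set \<Rightarrow> real \<Rightarrow> real \<Rightarrow> real \<Rightarrow> bmat \<Rightarrow> real" where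
  "Mnorm C d L g1 g2 k A =
     max (SUP a\<in>L. rowsum C d L g1 g2 k A a) (SUP b\<in>L. colsum C d L g1 g2 k A b)"

definition mapply :: "lpt set \<Rightarrow> bmat \<Rightarrow> (lpt \<Rightarrow> complex^2) \<Rightarrow> lpt \<Rightarrow> complex^2" where
  "mapply L A \<zeta> a = (\<Sum>\<^sub>\<infinity>b\<in>L. A a b *v \<zeta> b)"

end

theory Submission
  imports Defs
begin

text \<open>For \<open>-\<gamma> \<le> \<gamma>' \<le> \<gamma>\<close> let \<open>w(a) = e^{\<gamma>'\<^sub>1|a|}\<langle>a\<rangle>^{\<gamma>'\<^sub>2}\<close> be the weight of \<open>Y_{\<gamma>'}\<close>.
  Since \<open>|a| \<le> |b| + [a-b]\<close> and \<open>\<langle>a\<rangle> \<le> 2 max([a-b],1) \<langle>b\<rangle>\<close>, a Peetre-type inequality gives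
  \<open>w(a) \<le> e_{\<gamma>,\<kappa>}(a,b) w(b)\<close>. Hence \<open>|(A\<zeta>)_a| w(a)\<close> is bounded by
  the nonnegative kernel \<open>\<parallel>A_a^b\<parallel> e_{\<gamma>,\<kappa>}(a,b)\<close> applied to \<open>|\<zeta>_b| w(b)\<close>, and by the Schur test
  (Cauchy--Schwarz along rows, then summation along columns) this kernel acts on \<open>\<ell>\<^sup>2\<close> with norm
  at most the larger of its row and column sums, which is \<open>|A|_{\<gamma>,\<kappa>}\<close>.\<close>

lemma lnorm_nonneg: "0 \<le> lnorm d a"
  by (simp add: lnorm_def sum_nonneg)

lemma lnorm_add_le: "lnorm d (\<lambda>i. a i + b i) \<le> lnorm d a + lnorm d b"
  using L2_set_triangle_ineq[of "\<lambda>i. real_of_int (a i)" "\<lambda>i. real_of_int (b i)" "{..<d}"]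
  by (simp add: lnorm_def L2_set_def)

lemma lnorm_uminus: "lnorm d (\<lambda>i. - a i) = lnorm d a"
  by (simp add: lnorm_def)

lemma lnorm_le_add_bdist: "lnorm d a \<le> lnorm d b + bdist d a b"
proof -
  have "lnorm d a \<le> lnorm d b + lnorm d (\<lambda>i. a i - b i)"
    using lnorm_add_le[of d b "\<lambda>i. a i - b i"] by simp
  moreover have "lnorm d a \<le> lnorm d (\<lambda>i. - b i) + lnorm d (\<lambda>i. a i + b i)"
    using lnorm_add_le[of d "\<lambda>i. - b i" "\<lambda>i. a i + b i"] by simp
  ultimately show ?thesis
    unfolding bdist_def lnorm_uminus by linarith
qed

lemma bdist_commute: "bdist d a b = bdist d b a"
  using lnorm_uminus[of d "\<lambda>i. b i - a i"] by (simp add: bdist_def add.commute)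

lemma bdist_nonneg: "0 \<le> bdist d a b"
  by (simp add: bdist_def lnorm_nonneg)

lemma jbr_ge_1: "1 \<le> jbr d a"
  by (simp add: jbr_def)

lemma jbr_le_mult_bdist: "jbr d a \<le> 2 * max (bdist d a b) 1 * jbr d b"
proof -
  define m where "m = max (bdist d a b) 1"
  have "jbr d a \<le> jbr d b + m"
    using lnorm_le_add_bdist[of d a b] bdist_nonneg[of d a b] lnorm_nonneg[of d b]
    unfolding jbr_def m_def by linarith
  also have "\<dots> \<le> jbr d b * m + jbr d b * m"
  proof -
    have "1 \<le> m" by (simp add: m_def)
    then show ?thesis
      using jbr_ge_1[of d b] mult_le_cancel_left1[of "jbr d b" m] mult_le_cancel_right1[of m "jbr d b"]
      by linarith
  qed
  finally show ?thesis by (simp add: m_def algebra_simps)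
qed

section \<open>Comparison of weights\<close>

lemma exp_lnorm_le:
  assumes "\<bar>t\<bar> \<le> g"
  shows "exp (t * lnorm d a) \<le> exp (g * bdist d a b) * exp (t * lnorm d b)"
proof -
  have "t * lnorm d a \<le> t * lnorm d b + \<bar>t\<bar> * bdist d a b"
  proof (cases "0 \<le> t")
    case True
    then show ?thesis
      using mult_left_mono[OF lnorm_le_add_bdist[of d a b] True] by (simp add: algebra_simps)
  next
    case False
    then show ?thesis
      using mult_left_mono_neg[OF lnorm_le_add_bdist[of d b a], of t] bdist_commute[of d a b]
      by (simp add: algebra_simps)
  qed
  also have "\<dots> \<le> t * lnorm d b + g * bdist d a b"
    using mult_right_mono[OF assms bdist_nonneg] by simp
  finally show ?thesis
    by (simp add: exp_add[symmetric] add.commute)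
qed

lemma jbr_powr_le:
  assumes "\<bar>t\<bar> \<le> g"
  shows "jbr d a powr t \<le> (2 * max (bdist d a b) 1) powr g * jbr d b powr t"
proof -
  define m where "m = 2 * max (bdist d a b) 1"
  have m: "1 \<le> m" by (simp add: m_def)
  have pos: "0 < jbr d a" "0 < jbr d b"
    using jbr_ge_1[of d a] jbr_ge_1[of d b] by auto
  have "jbr d a powr t \<le> m powr \<bar>t\<bar> * jbr d b powr t"
  proof (cases "0 \<le> t")
    case True
    have "jbr d a powr t \<le> (m * jbr d b) powr t"
      using jbr_le_mult_bdist[of d a b] True pos by (simp add: m_def powr_mono2)
    then show ?thesis using True m pos by (simp add: powr_mult)
  next
    case False
    have "jbr d b powr (-t) \<le> (m * jbr d a) powr (-t)"
      using jbr_le_mult_bdist[of d b a] bdist_commute[of d a b] False pos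
      by (simp add: m_def powr_mono2)
    then show ?thesis
      using False m pos by (simp add: powr_mult powr_minus divide_simps mult.commute)
  qed
  also have "\<dots> \<le> m powr g * jbr d b powr t"
    using m assms by (simp add: powr_mono mult_right_mono)
  finally show ?thesis by (simp add: m_def)
qed

lemma wt_pos: "0 < wt d t1 t2 a"
  using jbr_ge_1[of d a] by (simp add: wt_def)

lemma ew_nonneg: "0 \<le> C \<Longrightarrow> 0 \<le> ew C d g1 g2 k a b"
  by (simp add: ew_def)

text \<open>The factor \<open>2\<^sup>\<gamma>\<^sub>2\<close> lost in \<open>\<langle>a\<rangle> \<le> 2 max([a-b],1) \<langle>b\<rangle>\<close> is absorbed by \<open>C\<close>.\<close>

lemma wt_le_ew_mult:
  assumes "\<bar>t1\<bar> \<le> g1" "\<bar>t2\<bar> \<le> g2" "0 \<le> k" "2 powr g2 \<le> C"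
  shows "wt d t1 t2 a \<le> ew C d g1 g2 k a b * wt d t1 t2 b"
proof -
  define E where "E = exp (g1 * bdist d a b)"
  define m where "m = max (bdist d a b) 1"
  define J where "J = min (jbr d a) (jbr d b) powr k"
  have m: "1 \<le> m" by (simp add: m_def)
  have J: "1 \<le> J"
    using jbr_ge_1 assms(3) by (simp add: J_def ge_one_powr_ge_zero)
  have "wt d t1 t2 a \<le> (E * exp (t1 * lnorm d b)) * (2 powr g2 * m powr g2 * jbr d b powr t2)"
    unfolding wt_def E_def
    using exp_lnorm_le[OF assms(1)] jbr_powr_le[OF assms(2), of d a b] m
    by (intro mult_mono) (auto simp: m_def powr_mult)
  also have "\<dots> = 2 powr g2 * (E * m powr g2 * wt d t1 t2 b)"
    by (simp add: wt_def)
  also have "\<dots> \<le> (C * J) * (E * m powr g2 * wt d t1 t2 b)"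
  proof (rule mult_right_mono)
    have "0 < C" using assms(4) powr_gt_zero[of 2 g2] by linarith
    then show "2 powr g2 \<le> C * J"
      using assms(4) J mult_le_cancel_left1[of C J] by linarith
  qed (use wt_pos[of d t1 t2 b] in \<open>simp add: E_def\<close>)
  also have "\<dots> = ew C d g1 g2 k a b * wt d t1 t2 b"
    by (simp add: ew_def E_def m_def J_def)
  finally show ?thesis .
qed

section \<open>The Schur test\<close>

lemma has_sum_finite_sum:
  fixes f :: "'i \<Rightarrow> 'a \<Rightarrow> 'b::topological_comm_monoid_add"
  assumes "finite F" "\<And>i. i \<in> F \<Longrightarrow> (f i has_sum s i) A"
  shows "((\<lambda>x. \<Sum>i\<in>F. f i x) has_sum (\<Sum>i\<in>F. s i)) A"
  using assms by (induction F rule: finite_induct) (simp_all add: has_sum_add)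

locale schur_kernel =
  fixes L :: "'a set" and K :: "'a \<Rightarrow> 'a \<Rightarrow> real" and M :: real
  assumes nonneg: "a \<in> L \<Longrightarrow> b \<in> L \<Longrightarrow> 0 \<le> K a b"
    and row_summable: "a \<in> L \<Longrightarrow> K a summable_on L"
    and row_bound: "a \<in> L \<Longrightarrow> infsum (K a) L \<le> M"
    and col_summable: "b \<in> L \<Longrightarrow> (\<lambda>a. K a b) summable_on L"
    and col_bound: "b \<in> L \<Longrightarrow> infsum (\<lambda>a. K a b) L \<le> M"
begin

lemma row_finite_sum_le:
  assumes "a \<in> L" "finite F" "F \<subseteq> L"
  shows "(\<Sum>b\<in>F. K a b) \<le> M"
proof -
  have "(\<Sum>b\<in>F. K a b) \<le> infsum (K a) L"
    by (rule finite_sum_le_infsum[OF row_summable[OF assms(1)] assms(2,3)]) (simp add: nonneg assms(1))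
  then show ?thesis using row_bound[OF assms(1)] by linarith
qed

lemma col_finite_sum_le:
  assumes "b \<in> L" "finite F" "F \<subseteq> L"
  shows "(\<Sum>a\<in>F. K a b) \<le> M"
proof -
  have "(\<Sum>a\<in>F. K a b) \<le> infsum (\<lambda>a. K a b) L"
    by (rule finite_sum_le_infsum[OF col_summable[OF assms(1)] assms(2,3)]) (simp add: nonneg assms(1))
  then show ?thesis using col_bound[OF assms(1)] by linarith
qed

lemma entry_le: "a \<in> L \<Longrightarrow> b \<in> L \<Longrightarrow> K a b \<le> M"
  using row_finite_sum_le[of a "{b}"] by simp

lemma bound_nonneg: "a \<in> L \<Longrightarrow> 0 \<le> M"
  using nonneg[of a a] entry_le[of a a] by linarith

lemma row_mult_summable:
  assumes "a \<in> L" "\<And>b. b \<in> L \<Longrightarrow> 0 \<le> y b" "y summable_on L"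
  shows "(\<lambda>b. K a b * y b) summable_on L"
proof (rule summable_on_comparison_test[OF summable_on_cmult_right[OF assms(3), of M]])
  fix b assume b: "b \<in> L"
  show "K a b * y b \<le> M * y b"
    by (rule mult_right_mono[OF entry_le[OF assms(1) b] assms(2)[OF b]])
  show "0 \<le> K a b * y b"
    using nonneg[OF assms(1) b] assms(2)[OF b] by simp
qed

text \<open>Compare with \<open>K a b (1 + x\<^sup>2)\<close>.\<close>

lemma row_mult_l2_summable:
  assumes "a \<in> L" "\<And>b. b \<in> L \<Longrightarrow> 0 \<le> x b" "(\<lambda>b. (x b)\<^sup>2) summable_on L"
  shows "(\<lambda>b. K a b * x b) summable_on L"
proof (rule summable_on_comparison_test)
  show "(\<lambda>b. K a b + K a b * (x b)\<^sup>2) summable_on L"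
    using assms by (intro summable_on_add row_summable row_mult_summable) auto
  fix b assume b: "b \<in> L"
  have "0 \<le> (x b - 1)\<^sup>2" by simp
  then have x: "x b \<le> 1 + (x b)\<^sup>2"
    using assms(2)[OF b] by (simp add: power2_eq_square algebra_simps)
  show "K a b * x b \<le> K a b + K a b * (x b)\<^sup>2"
    using mult_left_mono[OF x nonneg[OF assms(1) b]] by (simp add: algebra_simps)
  show "0 \<le> K a b * x b"
    using nonneg[OF assms(1) b] assms(2)[OF b] by simp
qed

lemma row_cauchy_schwarz:
  assumes "a \<in> L" "\<And>b. b \<in> L \<Longrightarrow> 0 \<le> x b" "(\<lambda>b. (x b)\<^sup>2) summable_on L"
  shows "(\<Sum>\<^sub>\<infinity>b\<in>L. K a b * x b)\<^sup>2 \<le> M * (\<Sum>\<^sub>\<infinity>b\<in>L. K a b * (x b)\<^sup>2)"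
proof -
  define t where "t = (\<Sum>\<^sub>\<infinity>b\<in>L. K a b * (x b)\<^sup>2)"
  have Kx2: "(\<lambda>b. K a b * (x b)\<^sup>2) summable_on L"
    using assms by (intro row_mult_summable) auto
  have M: "0 \<le> M"
    by (rule bound_nonneg[OF assms(1)])
  have t: "0 \<le> t"
    unfolding t_def using nonneg assms(1) by (intro infsum_nonneg mult_nonneg_nonneg) auto
  have "(\<Sum>\<^sub>\<infinity>b\<in>L. K a b * x b) \<le> sqrt (M * t)"
  proof (rule infsum_le_finite_sums[OF row_mult_l2_summable[OF assms]])
    fix F assume F: "finite F" "F \<subseteq> L"
    have "(\<Sum>b\<in>F. K a b * x b)\<^sup>2 = (\<Sum>b\<in>F. sqrt (K a b) * (sqrt (K a b) * x b))\<^sup>2"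
      using nonneg assms(1) F by (intro arg_cong[where f=power2] sum.cong) (auto simp: mult.assoc[symmetric])
    also have "\<dots> \<le> (\<Sum>b\<in>F. (sqrt (K a b))\<^sup>2) * (\<Sum>b\<in>F. (sqrt (K a b) * x b)\<^sup>2)"
      by (rule Cauchy_Schwarz_ineq_sum)
    also have "\<dots> = (\<Sum>b\<in>F. K a b) * (\<Sum>b\<in>F. K a b * (x b)\<^sup>2)"
      using nonneg assms(1) F by (intro arg_cong2[where f=times] sum.cong) (auto simp: power_mult_distrib)
    also have "\<dots> \<le> M * t"
    proof (rule mult_mono)
      show "(\<Sum>b\<in>F. K a b * (x b)\<^sup>2) \<le> t"
        unfolding t_def using finite_sum_le_infsum[OF Kx2 F] nonneg assms by simp
      show "0 \<le> M" by (fact M)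
      show "0 \<le> (\<Sum>b\<in>F. K a b * (x b)\<^sup>2)" using nonneg assms(1) F by (intro sum_nonneg) auto
    qed (rule row_finite_sum_le[OF assms(1) F])
    finally show "(\<Sum>b\<in>F. K a b * x b) \<le> sqrt (M * t)"
      by (rule real_le_rsqrt)
  qed
  moreover have "0 \<le> (\<Sum>\<^sub>\<infinity>b\<in>L. K a b * x b)"
    using nonneg assms(1,2) by (intro infsum_nonneg mult_nonneg_nonneg) auto
  ultimately have "(\<Sum>\<^sub>\<infinity>b\<in>L. K a b * x b)\<^sup>2 \<le> (sqrt (M * t))\<^sup>2"
    by (rule power_mono)
  also have "\<dots> = M * t"
    using M t by simp
  finally show ?thesis unfolding t_def .
qed

text \<open>On \<open>\<ell>\<^sup>1\<close> only the column sums matter: exchange the order of summation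
  over finite sets of rows.\<close>

lemma l1_bound:
  assumes "\<And>b. b \<in> L \<Longrightarrow> 0 \<le> y b" "y summable_on L"
  shows "(\<lambda>a. \<Sum>\<^sub>\<infinity>b\<in>L. K a b * y b) summable_on L"
    and "(\<Sum>\<^sub>\<infinity>a\<in>L. \<Sum>\<^sub>\<infinity>b\<in>L. K a b * y b) \<le> M * (\<Sum>\<^sub>\<infinity>b\<in>L. y b)"
proof -
  have finite_rows: "(\<Sum>a\<in>F. \<Sum>\<^sub>\<infinity>b\<in>L. K a b * y b) \<le> M * (\<Sum>\<^sub>\<infinity>b\<in>L. y b)"
    if F: "finite F" "F \<subseteq> L" for F
  proof -
    have "((\<lambda>b. \<Sum>a\<in>F. K a b * y b) has_sum (\<Sum>a\<in>F. \<Sum>\<^sub>\<infinity>b\<in>L. K a b * y b)) L"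
      using F assms by (intro has_sum_finite_sum row_mult_summable[THEN has_sum_infsum]) auto
    moreover have "((\<lambda>b. M * y b) has_sum M * (\<Sum>\<^sub>\<infinity>b\<in>L. y b)) L"
      using assms(2) by (intro has_sum_cmult_right has_sum_infsum)
    moreover have "(\<Sum>a\<in>F. K a b * y b) \<le> M * y b" if "b \<in> L" for b
      using mult_right_mono[OF col_finite_sum_le[OF that F] assms(1)[OF that]]
      by (simp add: sum_distrib_right)
    ultimately show ?thesis by (rule has_sum_mono)
  qed
  show summable: "(\<lambda>a. \<Sum>\<^sub>\<infinity>b\<in>L. K a b * y b) summable_on L"
  proof (rule nonneg_bdd_above_summable_on)
    show "0 \<le> (\<Sum>\<^sub>\<infinity>b\<in>L. K a b * y b)" if "a \<in> L" for a
      using nonneg[OF that] assms(1) by (intro infsum_nonneg mult_nonneg_nonneg) auto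
    show "bdd_above ((\<lambda>F. \<Sum>a\<in>F. \<Sum>\<^sub>\<infinity>b\<in>L. K a b * y b) ` {F. F \<subseteq> L \<and> finite F})"
      using finite_rows by (intro bdd_aboveI) auto
  qed
  show "(\<Sum>\<^sub>\<infinity>a\<in>L. \<Sum>\<^sub>\<infinity>b\<in>L. K a b * y b) \<le> M * (\<Sum>\<^sub>\<infinity>b\<in>L. y b)"
    by (rule infsum_le_finite_sums[OF summable finite_rows])
qed

lemma l2_bound:
  assumes "\<And>b. b \<in> L \<Longrightarrow> 0 \<le> x b" "(\<lambda>b. (x b)\<^sup>2) summable_on L"
  shows "(\<lambda>a. (\<Sum>\<^sub>\<infinity>b\<in>L. K a b * x b)\<^sup>2) summable_on L"
    and "(\<Sum>\<^sub>\<infinity>a\<in>L. (\<Sum>\<^sub>\<infinity>b\<in>L. K a b * x b)\<^sup>2) \<le> M\<^sup>2 * (\<Sum>\<^sub>\<infinity>b\<in>L. (x b)\<^sup>2)"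
proof -
  define t where "t = (\<lambda>a. \<Sum>\<^sub>\<infinity>b\<in>L. K a b * (x b)\<^sup>2)"
  have t: "t summable_on L" "infsum t L \<le> M * (\<Sum>\<^sub>\<infinity>b\<in>L. (x b)\<^sup>2)"
    unfolding t_def using l1_bound[of "\<lambda>b. (x b)\<^sup>2"] assms(2) by simp_all
  have Mt: "(\<lambda>a. M * t a) summable_on L"
    using t(1) by (rule summable_on_cmult_right)
  have cs: "(\<Sum>\<^sub>\<infinity>b\<in>L. K a b * x b)\<^sup>2 \<le> M * t a" if "a \<in> L" for a
    unfolding t_def using row_cauchy_schwarz[OF that assms] .
  show summable: "(\<lambda>a. (\<Sum>\<^sub>\<infinity>b\<in>L. K a b * x b)\<^sup>2) summable_on L"
    by (rule summable_on_comparison_test[OF Mt]) (use cs in auto)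
  show "(\<Sum>\<^sub>\<infinity>a\<in>L. (\<Sum>\<^sub>\<infinity>b\<in>L. K a b * x b)\<^sup>2) \<le> M\<^sup>2 * (\<Sum>\<^sub>\<infinity>b\<in>L. (x b)\<^sup>2)"
  proof (cases "L = {}")
    case False
    then obtain a where "a \<in> L" by blast
    then have "0 \<le> M" by (rule bound_nonneg)
    have "(\<Sum>\<^sub>\<infinity>a\<in>L. (\<Sum>\<^sub>\<infinity>b\<in>L. K a b * x b)\<^sup>2) \<le> (\<Sum>\<^sub>\<infinity>a\<in>L. M * t a)"
      by (rule infsum_mono[OF summable Mt cs])
    also have "\<dots> = M * infsum t L"
      by (rule infsum_cmult_right[OF t(1)])
    also have "\<dots> \<le> M\<^sup>2 * (\<Sum>\<^sub>\<infinity>b\<in>L. (x b)\<^sup>2)"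
      using mult_left_mono[OF t(2) \<open>0 \<le> M\<close>] by (simp add: power2_eq_square)
    finally show ?thesis .
  qed simp
qed

end

lemma bnorm_nonneg: "0 \<le> bnorm M"
  unfolding bnorm_def by (rule onorm_pos_le) simp

lemma norm_mult_vec_le_bnorm: "norm (M *v v) \<le> bnorm M * norm v"
  unfolding bnorm_def by (rule onorm) simp

definition abs_kernel :: "real \<Rightarrow> nat \<Rightarrow> real \<Rightarrow> real \<Rightarrow> real \<Rightarrow> bmat \<Rightarrow> lpt \<Rightarrow> lpt \<Rightarrow> real" where
  "abs_kernel C d g1 g2 k A a b = bnorm (A a b) * ew C d g1 g2 k a b"

definition weighted_abs :: "nat \<Rightarrow> real \<Rightarrow> real \<Rightarrow> (lpt \<Rightarrow> complex^2) \<Rightarrow> lpt \<Rightarrow> real" where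
  "weighted_abs d t1 t2 \<zeta> b = norm (\<zeta> b) * wt d t1 t2 b"

lemma inM_schur_kernel:
  assumes "inM C d L g1 g2 k A" "0 \<le> C"
  shows "schur_kernel L (abs_kernel C d g1 g2 k A) (Mnorm C d L g1 g2 k A)"
  unfolding abs_kernel_def
proof
  have bdd: "bdd_above (rowsum C d L g1 g2 k A ` L)" "bdd_above (colsum C d L g1 g2 k A ` L)"
    using assms(1) by (auto simp: inM_def)
  fix a b assume "a \<in> L" "b \<in> L"
  show "0 \<le> bnorm (A a b) * ew C d g1 g2 k a b"
    using bnorm_nonneg ew_nonneg[OF assms(2)] by (rule mult_nonneg_nonneg)
  show "(\<lambda>b. bnorm (A a b) * ew C d g1 g2 k a b) summable_on L"
    "(\<lambda>a. bnorm (A a b) * ew C d g1 g2 k a b) summable_on L"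
    using assms(1) \<open>a \<in> L\<close> \<open>b \<in> L\<close> by (auto simp: inM_def)
  show "(\<Sum>\<^sub>\<infinity>b\<in>L. bnorm (A a b) * ew C d g1 g2 k a b) \<le> Mnorm C d L g1 g2 k A"
    using cSUP_upper[OF \<open>a \<in> L\<close> bdd(1)] by (simp add: Mnorm_def rowsum_def)
  show "(\<Sum>\<^sub>\<infinity>a\<in>L. bnorm (A a b) * ew C d g1 g2 k a b) \<le> Mnorm C d L g1 g2 k A"
    using cSUP_upper[OF \<open>b \<in> L\<close> bdd(2)] by (simp add: Mnorm_def colsum_def)
qed

lemma weighted_abs_nonneg: "0 \<le> weighted_abs d t1 t2 \<zeta> b"
  using wt_pos[of d t1 t2 b] by (simp add: weighted_abs_def)

lemma inY_iff_l2: "inY d L t1 t2 \<zeta> \<longleftrightarrow> (\<lambda>b. (weighted_abs d t1 t2 \<zeta> b)\<^sup>2) summable_on L"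
  by (simp add: inY_def weighted_abs_def power_mult_distrib)

lemma Ynorm_eq_l2: "Ynorm d L t1 t2 \<zeta> = sqrt (\<Sum>\<^sub>\<infinity>b\<in>L. (weighted_abs d t1 t2 \<zeta> b)\<^sup>2)"
  by (simp add: Ynorm_def weighted_abs_def power_mult_distrib)

context
  fixes C d L g1 g2 k t1 t2 and A :: bmat and \<zeta> :: "lpt \<Rightarrow> complex^2"
  assumes weights: "\<bar>t1\<bar> \<le> g1" "\<bar>t2\<bar> \<le> g2" "0 \<le> k" "2 powr g2 \<le> C"
    and A: "inM C d L g1 g2 k A" and \<zeta>: "inY d L t1 t2 \<zeta>"
begin

interpretation schur_kernel L "abs_kernel C d g1 g2 k A" "Mnorm C d L g1 g2 k A"
  using A weights(4) powr_ge_zero[of 2 g2] by (intro inM_schur_kernel) linarith+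

lemma weighted_entry_le:
  "norm (A a b *v \<zeta> b) * wt d t1 t2 a \<le> abs_kernel C d g1 g2 k A a b * weighted_abs d t1 t2 \<zeta> b"
proof -
  have "norm (A a b *v \<zeta> b) * wt d t1 t2 a
      \<le> (bnorm (A a b) * norm (\<zeta> b)) * (ew C d g1 g2 k a b * wt d t1 t2 b)"
    using norm_mult_vec_le_bnorm wt_le_ew_mult[OF weights] bnorm_nonneg less_imp_le[OF wt_pos]
    by (intro mult_mono) auto
  then show ?thesis by (simp add: abs_kernel_def weighted_abs_def mult_ac)
qed

lemma kernel_row_summable:
  assumes "a \<in> L"
  shows "(\<lambda>b. abs_kernel C d g1 g2 k A a b * weighted_abs d t1 t2 \<zeta> b) summable_on L"
  using assms weighted_abs_nonneg \<zeta> unfolding inY_iff_l2 by (rule row_mult_l2_summable)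

lemma norm_row_summable:
  assumes "a \<in> L"
  shows "(\<lambda>b. norm (A a b *v \<zeta> b)) summable_on L"
proof -
  have "(\<lambda>b. norm (A a b *v \<zeta> b) * wt d t1 t2 a) summable_on L"
    by (rule summable_on_comparison_test[OF kernel_row_summable[OF assms]])
       (simp_all add: weighted_entry_le less_imp_le[OF wt_pos])
  moreover have "wt d t1 t2 a \<noteq> 0"
    using wt_pos[of d t1 t2 a] by simp
  ultimately show ?thesis
    by (simp add: summable_on_cmult_left')
qed

lemma mapply_summable: "a \<in> L \<Longrightarrow> (\<lambda>b. A a b *v \<zeta> b) summable_on L"
  using norm_row_summable by (rule abs_summable_summable)

lemma weighted_abs_mapply_le:
  assumes "a \<in> L"
  shows "weighted_abs d t1 t2 (mapply L A \<zeta>) a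
    \<le> (\<Sum>\<^sub>\<infinity>b\<in>L. abs_kernel C d g1 g2 k A a b * weighted_abs d t1 t2 \<zeta> b)"
proof -
  note norms = norm_row_summable[OF assms]
  have "weighted_abs d t1 t2 (mapply L A \<zeta>) a \<le> (\<Sum>\<^sub>\<infinity>b\<in>L. norm (A a b *v \<zeta> b)) * wt d t1 t2 a"
    unfolding weighted_abs_def mapply_def
    using norm_infsum_bound[OF norms] less_imp_le[OF wt_pos] by (rule mult_right_mono)
  also have "\<dots> = (\<Sum>\<^sub>\<infinity>b\<in>L. norm (A a b *v \<zeta> b) * wt d t1 t2 a)"
    by (rule infsum_cmult_left'[symmetric])
  also have "\<dots> \<le> (\<Sum>\<^sub>\<infinity>b\<in>L. abs_kernel C d g1 g2 k A a b * weighted_abs d t1 t2 \<zeta> b)"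
    using summable_on_cmult_left[OF norms] kernel_row_summable[OF assms] weighted_entry_le
    by (rule infsum_mono)
  finally show ?thesis .
qed

lemma mapply_inY_Ynorm_le:
  shows "inY d L t1 t2 (mapply L A \<zeta>)"
    and "Ynorm d L t1 t2 (mapply L A \<zeta>) \<le> Mnorm C d L g1 g2 k A * Ynorm d L t1 t2 \<zeta>"
proof -
  let ?y = "weighted_abs d t1 t2 (mapply L A \<zeta>)"
  let ?s = "\<lambda>a. (\<Sum>\<^sub>\<infinity>b\<in>L. abs_kernel C d g1 g2 k A a b * weighted_abs d t1 t2 \<zeta> b)\<^sup>2"
  have x2: "(\<lambda>b. (weighted_abs d t1 t2 \<zeta> b)\<^sup>2) summable_on L"
    using \<zeta> by (simp add: inY_iff_l2)
  note schur = l2_bound[OF weighted_abs_nonneg x2]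
  have y_le: "(?y a)\<^sup>2 \<le> ?s a" if "a \<in> L" for a
    using weighted_abs_mapply_le[OF that] weighted_abs_nonneg by (rule power_mono)
  have y2: "(\<lambda>a. (?y a)\<^sup>2) summable_on L"
  proof (rule summable_on_comparison_test[OF schur(1)])
    show "(?y a)\<^sup>2 \<le> ?s a" if "a \<in> L" for a
      using that by (rule y_le)
  qed simp
  then show "inY d L t1 t2 (mapply L A \<zeta>)"
    by (simp add: inY_iff_l2)
  show "Ynorm d L t1 t2 (mapply L A \<zeta>) \<le> Mnorm C d L g1 g2 k A * Ynorm d L t1 t2 \<zeta>"
  proof (cases "L = {}")
    case False
    then obtain a where "a \<in> L" by blast
    then have M: "0 \<le> Mnorm C d L g1 g2 k A" by (rule bound_nonneg)
    have "Ynorm d L t1 t2 (mapply L A \<zeta>) = sqrt (\<Sum>\<^sub>\<infinity>a\<in>L. (?y a)\<^sup>2)"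
      by (rule Ynorm_eq_l2)
    also have "\<dots> \<le> sqrt ((Mnorm C d L g1 g2 k A)\<^sup>2 * (\<Sum>\<^sub>\<infinity>b\<in>L. (weighted_abs d t1 t2 \<zeta> b)\<^sup>2))"
      using infsum_mono[OF y2 schur(1) y_le] schur(2) by simp
    also have "\<dots> = Mnorm C d L g1 g2 k A * Ynorm d L t1 t2 \<zeta>"
      using M by (simp add: Ynorm_eq_l2 real_sqrt_mult)
    finally show ?thesis .
  qed (simp add: Ynorm_def)
qed

end

theorem proposition2p3:
  fixes g2 \<kappa> :: real
  assumes "0 \<le> g2" and "0 \<le> \<kappa>"
  shows "\<exists>C0\<ge>1. \<forall>C\<ge>C0. \<forall>(d::nat) (L::lpt set) (g1::real) (tg1::real) (tg2::real)
           (A::bmat) (\<zeta>::lpt \<Rightarrow> complex^2).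
     d \<ge> 1 \<longrightarrow> L \<subseteq> lat d \<longrightarrow> 0 \<le> g1 \<longrightarrow>
     -g1 \<le> tg1 \<longrightarrow> tg1 \<le> g1 \<longrightarrow> -g2 \<le> tg2 \<longrightarrow> tg2 \<le> g2 \<longrightarrow>
     inM C d L g1 g2 \<kappa> A \<longrightarrow> inY d L tg1 tg2 \<zeta> \<longrightarrow>
       (\<forall>a\<in>L. (\<lambda>b. A a b *v \<zeta> b) summable_on L) \<and>
       inY d L tg1 tg2 (mapply L A \<zeta>) \<and>
       Ynorm d L tg1 tg2 (mapply L A \<zeta>) \<le> Mnorm C d L g1 g2 \<kappa> A * Ynorm d L tg1 tg2 \<zeta>"
proof -
  have C0: "1 \<le> 2 powr g2"
    using assms(1) by (simp add: ge_one_powr_ge_zero)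
  show ?thesis
  proof (intro exI[of _ "2 powr g2"] conjI[OF C0] allI impI, goal_cases)
    case (1 C d L g1 tg1 tg2 A \<zeta>)
    then have weights: "\<bar>tg1\<bar> \<le> g1" "\<bar>tg2\<bar> \<le> g2" "0 \<le> \<kappa>" "2 powr g2 \<le> C"
      using assms(2) by auto
    from 1 have A: "inM C d L g1 g2 \<kappa> A" and \<zeta>: "inY d L tg1 tg2 \<zeta>"
      by simp_all
    show ?case
      using mapply_summable[OF weights A \<zeta>] mapply_inY_Ynorm_le[OF weights A \<zeta>] by blast
  qed
qed

end
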